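(* (Sufficiency) Let $f(\underline{X})=\sum_{\ell=1}^{L}\prod_{i=1}^{n} f_i^{(\ell)}(X_i)$ with arbitrary real functions $f_i^{(\ell)}$. If for every $i\in[n]$ and $\ell\in[L]$ the encoding of source $i$ perfectly secures $f_i^{(\ell)}(X_i)$, i.e. $\mathbb{E}[f_i^{(\ell)}(X_i)\mid g_i(X_i,K_i)]=\mathbb{E}[f_i^{(\ell)}(X_i)]$ for every observed value, then $f(\underline{X})$ is perfectly secured, i.e. $\mathbb{E}[f(\underline{X})\mid g(\underline{X})]=\mathbb{E}[f(\underline{X})]$ for every observed value. (Necessity) Suppose either (1) $f(\underline{X})=\sum_{i=1}^n f_i(X_i)$, or (2) $f(\underline{X})=\prod_{i=1}^n f_i(X_i)$ with $\prod_{i=1}^n\mathbb{E}[f_i(X_i)]\cdot\mathrm{var}[f_i(X_i)]\neq 0$. Then for any encoding scheme under which the receiver computes $f(\underline{X})$ exactly and $f(\underline{X})$ is perfectly secured, each $f_i(X_i)$ is recoverable by the receiver from $g_i(X_i,K_i)$ and $K_i$, and each $f_i(X_i)$ is perfectly secured, i.e. $\mathbb{E}[f_i(X_i)\mid g_i(X_i,K_i)]=\mathbb{E}[f_i(X_i)]$ for every observed value.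
   Context: Multi-source setting: $n$ sources; source $i$ produces $X_i$ from a finite alphabet $\mathcal{X}_i$, with $X_1,\dots,X_n$ mutually independent. Source $i$ shares a key $K_i$ uniform on $\{1,\dots,2^{k_i}\}$ with the receiver only; keys are independent of each other and of the sources. Source $i$ transmits $g_i(X_i,K_i)$, where for each key value the map $x\mapsto g_i(x,K_i)$ is such that the receiver (knowing all keys) can compute the desired function $f:\prod_i\mathcal{X}_i\to\mathbb{R}$ exactly. The eavesdropper observes $g(\underline{X})=(g_1(X_1,K_1),\dots,g_n(X_n,K_n))$ but no keys. Her distortion is $D_{ach}=\min_{\hat f}\mathbb{E}[(f(\underline{X})-\hat f(g(\underline{X})))^2]$ over all estimators $\hat f$, and $D_{max}=\mathrm{var}(f(\underline{X}))$. A real function $h$ of the sources is called perfectly secured if the eavesdropper's minimum mean squared error for estimating $h$ from her observation equals $\mathrm{var}(h)$, equivalently $\mathbb{E}[h\mid \text{observation}]=\mathbb{E}[h]$ for every observed value. *)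

theory Defs
  imports "HOL-Probability.Probability"
begin

definition key_pmf :: "nat \<Rightarrow> nat pmf" where
  "key_pmf k = pmf_of_set {1..2^k}"

definition joint_pmf :: "nat \<Rightarrow> (nat \<Rightarrow> 'x pmf) \<Rightarrow> (nat \<Rightarrow> nat) \<Rightarrow> ((nat \<Rightarrow> 'x) \<times> (nat \<Rightarrow> nat)) pmf" where
  "joint_pmf n P kk = pair_pmf (Pi_pmf {..<n} undefined P) (Pi_pmf {..<n} 0 (\<lambda>i. key_pmf (kk i)))"

definition local_pmf :: "(nat \<Rightarrow> 'x pmf) \<Rightarrow> (nat \<Rightarrow> nat) \<Rightarrow> nat \<Rightarrow> ('x \<times> nat) pmf" where
  "local_pmf P kk i = pair_pmf (P i) (key_pmf (kk i))"

definition eve_obs :: "nat \<Rightarrow> (nat \<Rightarrow> 'x \<Rightarrow> nat \<Rightarrow> 'y) \<Rightarrow> (nat \<Rightarrow> 'x) \<times> (nat \<Rightarrow> nat) \<Rightarrow> (nat \<Rightarrow> 'y)" where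
  "eve_obs n g \<omega> = restrict (\<lambda>i. g i (fst \<omega> i) (snd \<omega> i)) {..<n}"

definition perfectly_secured :: "'w pmf \<Rightarrow> ('w \<Rightarrow> 'o) \<Rightarrow> ('w \<Rightarrow> real) \<Rightarrow> bool" where
  "perfectly_secured M obs h \<longleftrightarrow>
     (\<forall>y \<in> obs ` set_pmf M.
        measure_pmf.expectation (cond_pmf M {\<omega>. obs \<omega> = y}) h = measure_pmf.expectation M h)"

definition receiver_computes :: "nat \<Rightarrow> (nat \<Rightarrow> 'x pmf) \<Rightarrow> (nat \<Rightarrow> nat) \<Rightarrow> (nat \<Rightarrow> 'x \<Rightarrow> nat \<Rightarrow> 'y)
    \<Rightarrow> ((nat \<Rightarrow> 'x) \<Rightarrow> real) \<Rightarrow> bool" where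
  "receiver_computes n P kk g f \<longleftrightarrow>
     (\<exists>dec. \<forall>\<omega> \<in> set_pmf (joint_pmf n P kk). dec (eve_obs n g \<omega>) (snd \<omega>) = f (fst \<omega>))"

definition locally_recoverable :: "(nat \<Rightarrow> 'x pmf) \<Rightarrow> (nat \<Rightarrow> nat) \<Rightarrow> (nat \<Rightarrow> 'x \<Rightarrow> nat \<Rightarrow> 'y)
    \<Rightarrow> nat \<Rightarrow> ('x \<Rightarrow> real) \<Rightarrow> bool" where
  "locally_recoverable P kk g i h \<longleftrightarrow>
     (\<exists>dec. \<forall>(x, k) \<in> set_pmf (local_pmf P kk i). dec (g i x k) k = h x)"

end

theory Submission
  imports Defs
begin

text \<open>Given an observation y, the event that the eavesdropper sees y is the intersection of
  the independent per-source events g_i(X_i,K_i) = y_i, so the conditional expectation of a product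
  of per-source quantities factors into the per-source conditional expectations; sufficiency then
  follows by linearity. For necessity fix a point (a, b) of the support (with F_j(a_j) \<noteq> 0 for
  all j in the multiplicative case) and vary only its i-th coordinate. Both the receiver's output
  f(a(i := x)) and the eavesdropper's conditional expectation of f at the varied observation are
  F_i(x), resp. E[F_i | g_i = t], combined with a term that does not depend on x, resp. t; in the
  multiplicative case that term is nonzero because E f = \<Prod>_j E F_j \<noteq> 0. Hence F_i is
  recoverable, and E[F_i | g_i = t] is constant in t, which forces it to equal E F_i.\<close>

text \<open>Only meaningful for observed values y: conditioning on a null event yields an
  unspecified distribution.\<close>
definition cond_expectation :: "'a pmf \<Rightarrow> ('a \<Rightarrow> 'b) \<Rightarrow> 'b \<Rightarrow> ('a \<Rightarrow> real) \<Rightarrow> real" where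
  "cond_expectation M obs y h = measure_pmf.expectation (cond_pmf M {\<omega>. obs \<omega> = y}) h"

lemma perfectly_secured_iff_cond_expectation:
  "perfectly_secured M obs h \<longleftrightarrow>
     (\<forall>y \<in> obs ` set_pmf M. cond_expectation M obs y h = measure_pmf.expectation M h)"
  by (simp add: perfectly_secured_def cond_expectation_def)

lemma perfectly_secured_cond_expectation:
  "perfectly_secured M obs h \<Longrightarrow> y \<in> obs ` set_pmf M \<Longrightarrow>
    cond_expectation M obs y h = measure_pmf.expectation M h"
  unfolding perfectly_secured_iff_cond_expectation by blast

lemma prod_of_bool: "(\<Prod>j\<in>A. of_bool (Q j) :: 'a :: comm_semiring_1) = of_bool (\<forall>j\<in>A. Q j)"
  if "finite A"
  using that by (induction A rule: finite_induct) auto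

lemma expectation_pair_pmf_finite:
  fixes h :: "'a \<times> 'b \<Rightarrow> real"
  assumes "finite (set_pmf A)" "finite (set_pmf B)"
  shows "measure_pmf.expectation (pair_pmf A B) h =
         measure_pmf.expectation A (\<lambda>a. measure_pmf.expectation B (\<lambda>b. h (a, b)))"
proof -
  have inner: "measure_pmf.expectation B (\<lambda>b. h (a, b)) = (\<Sum>b\<in>set_pmf B. pmf B b * h (a, b))" for a
    using assms by (subst integral_measure_pmf[of "set_pmf B"]) auto
  have "measure_pmf.expectation (pair_pmf A B) h = (\<Sum>z\<in>set_pmf A \<times> set_pmf B. pmf (pair_pmf A B) z * h z)"
    using assms by (subst integral_measure_pmf[of "set_pmf A \<times> set_pmf B"]) auto
  also have "\<dots> = (\<Sum>a\<in>set_pmf A. pmf A a * (\<Sum>b\<in>set_pmf B. pmf B b * h (a, b)))"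
    by (simp add: sum.cartesian_product sum_distrib_left mult.assoc, intro sum.cong) (auto simp: pmf_pair)
  also have "\<dots> = measure_pmf.expectation A (\<lambda>a. measure_pmf.expectation B (\<lambda>b. h (a, b)))"
    using assms by (subst integral_measure_pmf[of "set_pmf A"]) (auto simp: inner)
  finally show ?thesis .
qed

lemma expectation_Pi_pmf_prod_finite:
  fixes f :: "'i \<Rightarrow> 'a \<Rightarrow> real"
  assumes "finite A" "\<And>x. x \<in> A \<Longrightarrow> finite (set_pmf (p x))"
  shows "measure_pmf.expectation (Pi_pmf A d p) (\<lambda>y. \<Prod>x\<in>A. f x (y x)) =
         (\<Prod>x\<in>A. measure_pmf.expectation (p x) (f x))"
  using assms
proof (induction A rule: finite_induct)
  case (insert x A)
  have fin: "finite (set_pmf (Pi_pmf A d p))"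
    using insert by (auto simp: set_Pi_pmf intro!: finite_PiE_dflt)
  have prod_upd: "(\<Prod>z\<in>insert x A. f z ((b(x := a)) z)) = f x a * (\<Prod>z\<in>A. f z (b z))" for a b
    using insert.hyps by (auto intro!: prod.cong)
  have "measure_pmf.expectation (Pi_pmf (insert x A) d p) (\<lambda>y. \<Prod>z\<in>insert x A. f z (y z)) =
      measure_pmf.expectation (pair_pmf (p x) (Pi_pmf A d p))
        (\<lambda>(a, b). \<Prod>z\<in>insert x A. f z ((b(x := a)) z))"
    using insert.hyps by (simp add: Pi_pmf_insert case_prod_unfold)
  also have "\<dots> = measure_pmf.expectation (pair_pmf (p x) (Pi_pmf A d p))
      (\<lambda>(a, b). f x a * (\<Prod>z\<in>A. f z (b z)))"
    by (simp only: prod_upd)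
  also have "\<dots> = measure_pmf.expectation (p x) (f x) * (\<Prod>z\<in>A. measure_pmf.expectation (p z) (f z))"
    using insert fin by (simp add: expectation_pair_pmf_finite)
  finally show ?case
    using insert.hyps by simp
qed simp

lemma cond_expectation_eq_ratio:
  fixes h :: "'a \<Rightarrow> real"
  assumes fin: "finite (set_pmf M)" and y: "y \<in> obs ` set_pmf M"
  shows "cond_expectation M obs y h =
           measure_pmf.expectation M (\<lambda>\<omega>. of_bool (obs \<omega> = y) * h \<omega>) /
           measure_pmf.expectation M (\<lambda>\<omega>. of_bool (obs \<omega> = y))"
    and "measure_pmf.expectation M (\<lambda>\<omega>. of_bool (obs \<omega> = y)) > (0 :: real)"
proof -
  let ?A = "{\<omega>. obs \<omega> = y}"
  have ne: "set_pmf M \<inter> ?A \<noteq> {}"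
    using y by auto
  have cond: "measure_pmf.expectation (cond_pmf M ?A) h' =
      measure_pmf.expectation M (\<lambda>\<omega>. of_bool (obs \<omega> = y) * h' \<omega>) / measure_pmf.prob M ?A"
    for h' :: "'a \<Rightarrow> real"
    using fin ne
    by (subst (1 2) integral_measure_pmf[of "set_pmf M"])
       (auto simp: pmf_cond sum_divide_distrib intro!: sum.cong split: if_splits)
  have pos: "measure_pmf.prob M ?A > 0"
    using y by (auto intro: measure_pmf_posI)
  have prob: "measure_pmf.prob M ?A = measure_pmf.expectation M (\<lambda>\<omega>. of_bool (obs \<omega> = y))"
    using cond[of "\<lambda>_. 1"] pos by simp
  show "cond_expectation M obs y h =
           measure_pmf.expectation M (\<lambda>\<omega>. of_bool (obs \<omega> = y) * h \<omega>) /
           measure_pmf.expectation M (\<lambda>\<omega>. of_bool (obs \<omega> = y))"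
    unfolding cond_expectation_def cond prob ..
  show "measure_pmf.expectation M (\<lambda>\<omega>. of_bool (obs \<omega> = y)) > (0 :: real)"
    using pos prob by simp
qed

lemma expectation_split_by_observation:
  fixes h :: "'a \<Rightarrow> real"
  assumes fin: "finite (set_pmf M)"
  shows "measure_pmf.expectation M h =
     (\<Sum>y\<in>obs ` set_pmf M. measure_pmf.expectation M (\<lambda>\<omega>. of_bool (obs \<omega> = y) * h \<omega>))"
proof -
  have "(\<Sum>y\<in>obs ` set_pmf M. measure_pmf.expectation M (\<lambda>\<omega>. of_bool (obs \<omega> = y) * h \<omega>)) =
      measure_pmf.expectation M (\<lambda>\<omega>. \<Sum>y\<in>obs ` set_pmf M. of_bool (obs \<omega> = y) * h \<omega>)"
    by (rule Bochner_Integration.integral_sum[symmetric])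
       (auto intro: integrable_measure_pmf_finite[OF fin])
  also have "\<dots> = measure_pmf.expectation M h"
    using fin by (intro integral_cong_AE) (auto simp: AE_measure_pmf_iff)
  finally show ?thesis ..
qed

lemma perfectly_secured_if_cond_expectation_const:
  fixes h :: "'a \<Rightarrow> real"
  assumes fin: "finite (set_pmf M)"
    and const: "\<And>y. y \<in> obs ` set_pmf M \<Longrightarrow> cond_expectation M obs y h = D"
  shows "perfectly_secured M obs h"
proof -
  have weighted: "measure_pmf.expectation M (\<lambda>\<omega>. of_bool (obs \<omega> = y) * h \<omega>) =
      D * measure_pmf.expectation M (\<lambda>\<omega>. of_bool (obs \<omega> = y) * (1 :: real))"
    if y: "y \<in> obs ` set_pmf M" for y
    using cond_expectation_eq_ratio(1)[OF fin y, of h] cond_expectation_eq_ratio(2)[OF fin y] const[OF y]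
    by (simp add: field_simps)
  have "measure_pmf.expectation M h =
      D * (\<Sum>y\<in>obs ` set_pmf M. measure_pmf.expectation M (\<lambda>\<omega>. of_bool (obs \<omega> = y) * (1 :: real)))"
    by (simp only: expectation_split_by_observation[OF fin, where h=h and obs=obs] weighted
        sum_distrib_left cong: sum.cong)
  also have "\<dots> = D"
    using expectation_split_by_observation[OF fin, where h="\<lambda>_. 1" and obs=obs] by simp
  finally show ?thesis
    using const by (simp add: perfectly_secured_iff_cond_expectation)
qed

lemma cond_expectation_sum:
  fixes h :: "'i \<Rightarrow> 'a \<Rightarrow> real"
  assumes "finite (set_pmf M)" "y \<in> obs ` set_pmf M"
  shows "cond_expectation M obs y (\<lambda>\<omega>. \<Sum>l\<in>A. h l \<omega>) = (\<Sum>l\<in>A. cond_expectation M obs y (h l))"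
proof -
  have "finite (set_pmf (cond_pmf M {\<omega>. obs \<omega> = y}))"
    using assms by (subst set_cond_pmf) auto
  then show ?thesis
    unfolding cond_expectation_def
    by (intro Bochner_Integration.integral_sum integrable_measure_pmf_finite)
qed

lemma set_key_pmf [simp]: "set_pmf (key_pmf k) = {1..2^k}"
  unfolding key_pmf_def by (subst set_pmf_of_set) auto

lemma finite_set_local_pmf: "finite (set_pmf (P i)) \<Longrightarrow> finite (set_pmf (local_pmf P kk i))"
  by (simp add: local_pmf_def)

lemma mem_set_joint_pmf_iff:
  "\<omega> \<in> set_pmf (joint_pmf n P kk) \<longleftrightarrow>
    (\<forall>j<n. (fst \<omega> j, snd \<omega> j) \<in> set_pmf (local_pmf P kk j)) \<and>
    (\<forall>j\<ge>n. fst \<omega> j = undefined \<and> snd \<omega> j = 0)"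
  by (cases \<omega>) (auto simp: joint_pmf_def local_pmf_def set_Pi_pmf PiE_dflt_def not_less)

lemma finite_set_joint_pmf:
  "\<forall>i<n. finite (set_pmf (P i)) \<Longrightarrow> finite (set_pmf (joint_pmf n P kk))"
  by (auto simp: joint_pmf_def set_Pi_pmf intro!: finite_PiE_dflt)

lemma expectation_local_pmf_fst:
  "measure_pmf.expectation (local_pmf P kk i) (\<lambda>(x, k). h x) = measure_pmf.expectation (P i) (h :: 'x \<Rightarrow> real)"
  using expectation_pair_pmf_fst[of "P i" "key_pmf (kk i)" h]
  by (simp add: local_pmf_def case_prod_unfold)

lemma expectation_joint_pmf_prod:
  fixes u :: "nat \<Rightarrow> 'x \<Rightarrow> nat \<Rightarrow> real"
  assumes fin: "\<forall>i<n. finite (set_pmf (P i))"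
  shows "measure_pmf.expectation (joint_pmf n P kk) (\<lambda>\<omega>. \<Prod>j<n. u j (fst \<omega> j) (snd \<omega> j)) =
         (\<Prod>j<n. measure_pmf.expectation (local_pmf P kk j) (case_prod (u j)))"
proof -
  have "measure_pmf.expectation (joint_pmf n P kk) (\<lambda>\<omega>. \<Prod>j<n. u j (fst \<omega> j) (snd \<omega> j)) =
     measure_pmf.expectation (Pi_pmf {..<n} undefined P) (\<lambda>a.
       measure_pmf.expectation (Pi_pmf {..<n} 0 (\<lambda>i. key_pmf (kk i))) (\<lambda>b. \<Prod>j<n. u j (a j) (b j)))"
    unfolding joint_pmf_def using fin
    by (subst expectation_pair_pmf_finite) (auto simp: set_Pi_pmf intro!: finite_PiE_dflt)
  also have "\<dots> = measure_pmf.expectation (Pi_pmf {..<n} undefined P) (\<lambda>a.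
       \<Prod>j<n. measure_pmf.expectation (key_pmf (kk j)) (u j (a j)))"
    by (subst expectation_Pi_pmf_prod_finite) auto
  also have "\<dots> = (\<Prod>j<n. measure_pmf.expectation (P j) (\<lambda>x. measure_pmf.expectation (key_pmf (kk j)) (u j x)))"
    using fin by (subst expectation_Pi_pmf_prod_finite) auto
  also have "\<dots> = (\<Prod>j<n. measure_pmf.expectation (local_pmf P kk j) (case_prod (u j)))"
    using fin by (intro prod.cong refl) (simp add: local_pmf_def expectation_pair_pmf_finite)
  finally show ?thesis .
qed

lemma eve_obs_eq_iff:
  "y \<in> eve_obs n g ` S \<Longrightarrow> eve_obs n g \<omega> = y \<longleftrightarrow> (\<forall>j<n. g j (fst \<omega> j) (snd \<omega> j) = y j)"
  by (auto simp: eve_obs_def fun_eq_iff)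

lemma eve_obs_component_observed:
  assumes "y \<in> eve_obs n g ` set_pmf (joint_pmf n P kk)" "j < n"
  shows "y j \<in> case_prod (g j) ` set_pmf (local_pmf P kk j)"
proof -
  obtain \<omega> where \<omega>: "\<omega> \<in> set_pmf (joint_pmf n P kk)" "y = eve_obs n g \<omega>"
    using assms by auto
  then have "(fst \<omega> j, snd \<omega> j) \<in> set_pmf (local_pmf P kk j)"
    using assms(2) by (simp add: mem_set_joint_pmf_iff)
  moreover have "y j = case_prod (g j) (fst \<omega> j, snd \<omega> j)"
    using \<omega> assms(2) by (simp add: eve_obs_def)
  ultimately show ?thesis by blast
qed

lemma cond_expectation_joint_pmf_prod:
  fixes u :: "nat \<Rightarrow> 'x \<Rightarrow> nat \<Rightarrow> real"
  assumes fin: "\<forall>i<n. finite (set_pmf (P i))"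
    and y: "y \<in> eve_obs n g ` set_pmf (joint_pmf n P kk)"
  shows "cond_expectation (joint_pmf n P kk) (eve_obs n g) y (\<lambda>\<omega>. \<Prod>j<n. u j (fst \<omega> j) (snd \<omega> j)) =
         (\<Prod>j<n. cond_expectation (local_pmf P kk j) (case_prod (g j)) (y j) (case_prod (u j)))"
proof -
  have indicator: "of_bool (eve_obs n g \<omega> = y) = (\<Prod>j<n. of_bool (g j (fst \<omega> j) (snd \<omega> j) = y j) :: real)" for \<omega>
    by (auto simp: eve_obs_eq_iff[OF y] prod_of_bool)
  have local_ratio: "cond_expectation (local_pmf P kk j) (case_prod (g j)) (y j) (case_prod (u j)) =
      measure_pmf.expectation (local_pmf P kk j) (\<lambda>(x, k). of_bool (g j x k = y j) * u j x k) /
      measure_pmf.expectation (local_pmf P kk j) (\<lambda>(x, k). of_bool (g j x k = y j))" if "j < n" for j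
    using cond_expectation_eq_ratio(1)[OF finite_set_local_pmf eve_obs_component_observed[OF y that]] fin that
    by (simp add: case_prod_unfold)
  show ?thesis
    using cond_expectation_eq_ratio(1)[OF finite_set_joint_pmf[OF fin] y]
      expectation_joint_pmf_prod[OF fin, where u="\<lambda>j x k. of_bool (g j x k = y j) * u j x k"]
      expectation_joint_pmf_prod[OF fin, where u="\<lambda>j x k. of_bool (g j x k = y j)"]
    by (simp add: indicator prod.distrib local_ratio prod_dividef)
qed

lemma cond_expectation_joint_pmf_component:
  fixes h :: "'x \<Rightarrow> nat \<Rightarrow> real"
  assumes fin: "\<forall>i<n. finite (set_pmf (P i))"
    and y: "y \<in> eve_obs n g ` set_pmf (joint_pmf n P kk)" and i: "i < n"
  shows "cond_expectation (joint_pmf n P kk) (eve_obs n g) y (\<lambda>\<omega>. h (fst \<omega> i) (snd \<omega> i)) =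
         cond_expectation (local_pmf P kk i) (case_prod (g i)) (y i) (case_prod h)"
proof -
  have "(\<Prod>j<n. cond_expectation (local_pmf P kk j) (case_prod (g j)) (y j)
            (\<lambda>(x, k). if j = i then h x k else 1)) =
        (\<Prod>j<n. if j = i then cond_expectation (local_pmf P kk i) (case_prod (g i)) (y i) (case_prod h) else 1)"
    by (intro prod.cong refl) (auto simp: cond_expectation_def case_prod_unfold)
  then show ?thesis
    using cond_expectation_joint_pmf_prod[OF fin y, of "\<lambda>j x k. if j = i then h x k else 1"] i
    by (simp add: prod.delta if_distrib[of "\<lambda>a. h _ _ * a"] cong: if_cong)
qed

lemma perfectly_secured_sum_of_products:
  fixes F :: "nat \<Rightarrow> nat \<Rightarrow> 'x \<Rightarrow> real"
  assumes fin: "\<forall>i<n. finite (set_pmf (P i))"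
    and secured: "\<And>i l. i < n \<Longrightarrow> l < L \<Longrightarrow>
      perfectly_secured (local_pmf P kk i) (case_prod (g i)) (\<lambda>(x, k). F l i x)"
  shows "perfectly_secured (joint_pmf n P kk) (eve_obs n g) (\<lambda>\<omega>. \<Sum>l<L. \<Prod>i<n. F l i (fst \<omega> i))"
  unfolding perfectly_secured_iff_cond_expectation
proof
  fix y
  assume y: "y \<in> eve_obs n g ` set_pmf (joint_pmf n P kk)"
  have "cond_expectation (joint_pmf n P kk) (eve_obs n g) y (\<lambda>\<omega>. \<Sum>l<L. \<Prod>i<n. F l i (fst \<omega> i)) =
      (\<Sum>l<L. \<Prod>i<n. cond_expectation (local_pmf P kk i) (case_prod (g i)) (y i) (\<lambda>(x, k). F l i x))"
    using cond_expectation_joint_pmf_prod[OF fin y, where u="\<lambda>i x k. F _ i x"]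
    by (simp add: cond_expectation_sum[OF finite_set_joint_pmf[OF fin] y])
  also have "\<dots> = (\<Sum>l<L. \<Prod>i<n. measure_pmf.expectation (local_pmf P kk i) (\<lambda>(x, k). F l i x))"
  proof (intro sum.cong prod.cong refl)
    fix l i
    assume "l \<in> {..<L}" "i \<in> {..<n}"
    then show "cond_expectation (local_pmf P kk i) (case_prod (g i)) (y i) (\<lambda>(x, k). F l i x) =
        measure_pmf.expectation (local_pmf P kk i) (\<lambda>(x, k). F l i x)"
      by (intro perfectly_secured_cond_expectation secured eve_obs_component_observed[OF y]) auto
  qed
  also have "\<dots> = (\<Sum>l<L. measure_pmf.expectation (joint_pmf n P kk) (\<lambda>\<omega>. \<Prod>i<n. F l i (fst \<omega> i)))"
    using expectation_joint_pmf_prod[OF fin, where u="\<lambda>i x k. F _ i x"] by simp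
  also have "\<dots> = measure_pmf.expectation (joint_pmf n P kk) (\<lambda>\<omega>. \<Sum>l<L. \<Prod>i<n. F l i (fst \<omega> i))"
    by (intro Bochner_Integration.integral_sum[symmetric] integrable_measure_pmf_finite
        finite_set_joint_pmf[OF fin])
  finally show "cond_expectation (joint_pmf n P kk) (eve_obs n g) y (\<lambda>\<omega>. \<Sum>l<L. \<Prod>i<n. F l i (fst \<omega> i)) =
      measure_pmf.expectation (joint_pmf n P kk) (\<lambda>\<omega>. \<Sum>l<L. \<Prod>i<n. F l i (fst \<omega> i))" .
qed

lemma sum_fun_upd_remove:
  assumes "finite A" "i \<in> A"
  shows "(\<Sum>j\<in>A. G j ((a(i := x)) j)) = G i x + (\<Sum>j\<in>A - {i}. G j (a j))"
  using assms by (subst sum.remove[of A i]) (auto intro!: sum.cong)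

lemma prod_fun_upd_remove:
  assumes "finite A" "i \<in> A"
  shows "(\<Prod>j\<in>A. G j ((a(i := x)) j)) = G i x * (\<Prod>j\<in>A - {i}. G j (a j))"
  using assms by (subst prod.remove[of A i]) (auto intro!: prod.cong)

lemma joint_pmf_support_point:
  assumes "\<And>j. j < n \<Longrightarrow> \<exists>x \<in> set_pmf (P j). Q j x"
  shows "\<exists>a b. (a, b) \<in> set_pmf (joint_pmf n P kk) \<and> (\<forall>j<n. Q j (a j))"
proof -
  obtain xs where xs: "\<And>j. j < n \<Longrightarrow> xs j \<in> set_pmf (P j) \<and> Q j (xs j)"
    using assms by metis
  show ?thesis
    by (rule exI[of _ "\<lambda>j. if j < n then xs j else undefined"], rule exI[of _ "\<lambda>j. if j < n then 1 else 0"])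
       (auto simp: mem_set_joint_pmf_iff local_pmf_def xs)
qed

lemma joint_pmf_support_update:
  assumes "(a, b) \<in> set_pmf (joint_pmf n P kk)" "i < n" "(x, k) \<in> set_pmf (local_pmf P kk i)"
  shows "(a(i := x), b(i := k)) \<in> set_pmf (joint_pmf n P kk)"
  using assms by (auto simp: mem_set_joint_pmf_iff)

lemma eve_obs_update:
  "i < n \<Longrightarrow> eve_obs n g (a(i := x), b(i := k)) = (eve_obs n g (a, b))(i := g i x k)"
  by (auto simp: eve_obs_def fun_eq_iff)

lemma eve_obs_update_observed:
  assumes "(a, b) \<in> set_pmf (joint_pmf n P kk)" "i < n"
    and "t \<in> case_prod (g i) ` set_pmf (local_pmf P kk i)"
  shows "(eve_obs n g (a, b))(i := t) \<in> eve_obs n g ` set_pmf (joint_pmf n P kk)"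
proof -
  obtain x k where xk: "(x, k) \<in> set_pmf (local_pmf P kk i)" "t = g i x k"
    using assms(3) by auto
  show ?thesis
    using joint_pmf_support_update[OF assms(1,2) xk(1)] eve_obs_update[OF assms(2)] xk(2)
    by (metis image_eqI)
qed

lemma locally_recoverable_if_update_determines:
  assumes "receiver_computes n P kk g f" "(a, b) \<in> set_pmf (joint_pmf n P kk)" "i < n"
    and determines: "\<And>x. x \<in> set_pmf (P i) \<Longrightarrow> \<phi> (f (a(i := x))) = h x"
  shows "locally_recoverable P kk g i h"
proof -
  obtain dec where dec: "\<And>\<omega>. \<omega> \<in> set_pmf (joint_pmf n P kk) \<Longrightarrow> dec (eve_obs n g \<omega>) (snd \<omega>) = f (fst \<omega>)"
    using assms(1) unfolding receiver_computes_def by blast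
  have "\<phi> (dec ((eve_obs n g (a, b))(i := g i x k)) (b(i := k))) = h x"
    if "(x, k) \<in> set_pmf (local_pmf P kk i)" for x k
    using dec[OF joint_pmf_support_update[OF assms(2,3) that]] that
    by (simp add: eve_obs_update[OF assms(3)] determines local_pmf_def)
  then show ?thesis
    unfolding locally_recoverable_def
    by (intro exI[of _ "\<lambda>t k. \<phi> (dec ((eve_obs n g (a, b))(i := t)) (b(i := k)))"]) auto
qed

lemma summands_recoverable_and_secured:
  fixes F :: "nat \<Rightarrow> 'x \<Rightarrow> real"
  assumes fin: "\<forall>i<n. finite (set_pmf (P i))"
    and computes: "receiver_computes n P kk g (\<lambda>xs. \<Sum>j<n. F j (xs j))"
    and secured: "perfectly_secured (joint_pmf n P kk) (eve_obs n g) (\<lambda>\<omega>. \<Sum>j<n. F j (fst \<omega> j))"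
    and i: "i < n"
  shows "locally_recoverable P kk g i (F i)"
    and "perfectly_secured (local_pmf P kk i) (case_prod (g i)) (\<lambda>(x, k). F i x)"
proof -
  obtain a b where ab: "(a, b) \<in> set_pmf (joint_pmf n P kk)"
    using joint_pmf_support_point[of n P "\<lambda>_ _. True"] set_pmf_not_empty by fast
  show "locally_recoverable P kk g i (F i)"
    by (rule locally_recoverable_if_update_determines[OF computes ab i,
          where \<phi>="\<lambda>z. z - (\<Sum>j\<in>{..<n} - {i}. F j (a j))"])
       (use sum_fun_upd_remove[of "{..<n}" i F a] i in simp)
  define Y where "Y = eve_obs n g (a, b)"
  define ce where "ce j t = cond_expectation (local_pmf P kk j) (case_prod (g j)) t (\<lambda>(x, k). F j x)" for j t
  have "ce i t = measure_pmf.expectation (joint_pmf n P kk) (\<lambda>\<omega>. \<Sum>j<n. F j (fst \<omega> j))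
      - (\<Sum>j\<in>{..<n} - {i}. ce j (Y j))"
    if "t \<in> case_prod (g i) ` set_pmf (local_pmf P kk i)" for t
  proof -
    have y: "Y(i := t) \<in> eve_obs n g ` set_pmf (joint_pmf n P kk)"
      unfolding Y_def by (rule eve_obs_update_observed[where g=g, OF ab i that])
    have "measure_pmf.expectation (joint_pmf n P kk) (\<lambda>\<omega>. \<Sum>j<n. F j (fst \<omega> j)) =
        cond_expectation (joint_pmf n P kk) (eve_obs n g) (Y(i := t)) (\<lambda>\<omega>. \<Sum>j<n. F j (fst \<omega> j))"
      by (rule perfectly_secured_cond_expectation[OF secured y, symmetric])
    also have "\<dots> = (\<Sum>j<n. ce j ((Y(i := t)) j))"
      using cond_expectation_joint_pmf_component[OF fin y, where h="\<lambda>x k. F _ x"]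
      by (simp add: cond_expectation_sum[OF finite_set_joint_pmf[OF fin] y] ce_def)
    also have "\<dots> = ce i t + (\<Sum>j\<in>{..<n} - {i}. ce j (Y j))"
      using sum_fun_upd_remove[of "{..<n}" i ce Y t] i by simp
    finally show ?thesis by simp
  qed
  then show "perfectly_secured (local_pmf P kk i) (case_prod (g i)) (\<lambda>(x, k). F i x)"
    using fin i by (intro perfectly_secured_if_cond_expectation_const finite_set_local_pmf) (auto simp: ce_def)
qed

lemma factors_recoverable_and_secured:
  fixes F :: "nat \<Rightarrow> 'x \<Rightarrow> real"
  assumes fin: "\<forall>i<n. finite (set_pmf (P i))"
    and nonzero_mean: "\<And>j. j < n \<Longrightarrow> measure_pmf.expectation (P j) (F j) \<noteq> 0"
    and computes: "receiver_computes n P kk g (\<lambda>xs. \<Prod>j<n. F j (xs j))"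
    and secured: "perfectly_secured (joint_pmf n P kk) (eve_obs n g) (\<lambda>\<omega>. \<Prod>j<n. F j (fst \<omega> j))"
    and i: "i < n"
  shows "locally_recoverable P kk g i (F i)"
    and "perfectly_secured (local_pmf P kk i) (case_prod (g i)) (\<lambda>(x, k). F i x)"
proof -
  have "\<exists>x \<in> set_pmf (P j). F j x \<noteq> 0" if "j < n" for j
  proof (rule ccontr)
    assume "\<not> (\<exists>x \<in> set_pmf (P j). F j x \<noteq> 0)"
    then have "measure_pmf.expectation (P j) (F j) = measure_pmf.expectation (P j) (\<lambda>_. 0)"
      by (intro integral_cong_AE) (auto simp: AE_measure_pmf_iff)
    with nonzero_mean[OF that] show False by simp
  qed
  then obtain a b where ab: "(a, b) \<in> set_pmf (joint_pmf n P kk)" and a: "\<forall>j<n. F j (a j) \<noteq> 0"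
    using joint_pmf_support_point[of n P "\<lambda>j x. F j x \<noteq> 0"] by blast
  show "locally_recoverable P kk g i (F i)"
    by (rule locally_recoverable_if_update_determines[OF computes ab i,
          where \<phi>="\<lambda>z. z / (\<Prod>j\<in>{..<n} - {i}. F j (a j))"])
       (use prod_fun_upd_remove[of "{..<n}" i F a] a i in simp)
  define E where "E = measure_pmf.expectation (joint_pmf n P kk) (\<lambda>\<omega>. \<Prod>j<n. F j (fst \<omega> j))"
  have "E = (\<Prod>j<n. measure_pmf.expectation (P j) (F j))"
    using expectation_joint_pmf_prod[OF fin, where u="\<lambda>j x k. F j x"]
    by (simp add: E_def expectation_local_pmf_fst)
  then have E: "E \<noteq> 0"
    using nonzero_mean by simp
  define Y where "Y = eve_obs n g (a, b)"
  define ce where "ce j t = cond_expectation (local_pmf P kk j) (case_prod (g j)) t (\<lambda>(x, k). F j x)" for j t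
  have "ce i t = E / (\<Prod>j\<in>{..<n} - {i}. ce j (Y j))"
    if "t \<in> case_prod (g i) ` set_pmf (local_pmf P kk i)" for t
  proof -
    have y: "Y(i := t) \<in> eve_obs n g ` set_pmf (joint_pmf n P kk)"
      unfolding Y_def by (rule eve_obs_update_observed[where g=g, OF ab i that])
    have "E = cond_expectation (joint_pmf n P kk) (eve_obs n g) (Y(i := t)) (\<lambda>\<omega>. \<Prod>j<n. F j (fst \<omega> j))"
      unfolding E_def by (rule perfectly_secured_cond_expectation[OF secured y, symmetric])
    also have "\<dots> = (\<Prod>j<n. ce j ((Y(i := t)) j))"
      using cond_expectation_joint_pmf_prod[OF fin y, where u="\<lambda>j x k. F j x"] by (simp add: ce_def)
    also have "\<dots> = ce i t * (\<Prod>j\<in>{..<n} - {i}. ce j (Y j))"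
      using prod_fun_upd_remove[of "{..<n}" i ce Y t] i by simp
    finally show ?thesis
      using E by (auto simp: field_simps)
  qed
  then show "perfectly_secured (local_pmf P kk i) (case_prod (g i)) (\<lambda>(x, k). F i x)"
    using fin i by (intro perfectly_secured_if_cond_expectation_const finite_set_local_pmf) (auto simp: ce_def)
qed

theorem theorem2:
  fixes n :: nat and P :: "nat \<Rightarrow> 'x pmf" and kk :: "nat \<Rightarrow> nat"
    and g :: "nat \<Rightarrow> 'x \<Rightarrow> nat \<Rightarrow> 'y"
  assumes fin: "\<forall>i<n. finite (set_pmf (P i))"
  shows
    "(\<forall>(L::nat) (F::nat \<Rightarrow> nat \<Rightarrow> 'x \<Rightarrow> real).
        receiver_computes n P kk g (\<lambda>xs. \<Sum>l<L. \<Prod>i<n. F l i (xs i)) \<and>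
        (\<forall>i<n. \<forall>l<L. perfectly_secured (local_pmf P kk i) (\<lambda>(x, k). g i x k) (\<lambda>(x, k). F l i x))
        \<longrightarrow> perfectly_secured (joint_pmf n P kk) (eve_obs n g)
              (\<lambda>\<omega>. \<Sum>l<L. \<Prod>i<n. F l i (fst \<omega> i)))
   \<and>
     (\<forall>(F::nat \<Rightarrow> 'x \<Rightarrow> real) (f::(nat \<Rightarrow> 'x) \<Rightarrow> real).
        (f = (\<lambda>xs. \<Sum>i<n. F i (xs i)) \<or>
         (f = (\<lambda>xs. \<Prod>i<n. F i (xs i)) \<and>
          (\<Prod>i<n. measure_pmf.expectation (P i) (F i) * measure_pmf.variance (P i) (F i)) \<noteq> 0)) \<and>
        receiver_computes n P kk g f \<and>
        perfectly_secured (joint_pmf n P kk) (eve_obs n g) (\<lambda>\<omega>. f (fst \<omega>))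
        \<longrightarrow> (\<forall>i<n. locally_recoverable P kk g i (F i) \<and>
                   perfectly_secured (local_pmf P kk i) (\<lambda>(x, k). g i x k) (\<lambda>(x, k). F i x)))"
proof (rule conjI; intro allI impI)
  fix L :: nat and F :: "nat \<Rightarrow> nat \<Rightarrow> 'x \<Rightarrow> real"
  assume "receiver_computes n P kk g (\<lambda>xs. \<Sum>l<L. \<Prod>i<n. F l i (xs i)) \<and>
    (\<forall>i<n. \<forall>l<L. perfectly_secured (local_pmf P kk i) (\<lambda>(x, k). g i x k) (\<lambda>(x, k). F l i x))"
  then show "perfectly_secured (joint_pmf n P kk) (eve_obs n g) (\<lambda>\<omega>. \<Sum>l<L. \<Prod>i<n. F l i (fst \<omega> i))"
    by (intro perfectly_secured_sum_of_products[OF fin]) auto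
next
  fix F :: "nat \<Rightarrow> 'x \<Rightarrow> real" and f :: "(nat \<Rightarrow> 'x) \<Rightarrow> real" and i :: nat
  assume H: "(f = (\<lambda>xs. \<Sum>i<n. F i (xs i)) \<or>
      (f = (\<lambda>xs. \<Prod>i<n. F i (xs i)) \<and>
       (\<Prod>i<n. measure_pmf.expectation (P i) (F i) * measure_pmf.variance (P i) (F i)) \<noteq> 0)) \<and>
    receiver_computes n P kk g f \<and> perfectly_secured (joint_pmf n P kk) (eve_obs n g) (\<lambda>\<omega>. f (fst \<omega>))"
    and i: "i < n"
  from H have computes: "receiver_computes n P kk g f"
    and secured: "perfectly_secured (joint_pmf n P kk) (eve_obs n g) (\<lambda>\<omega>. f (fst \<omega>))"
    by auto
  from H consider
      (sum) "f = (\<lambda>xs. \<Sum>i<n. F i (xs i))"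
    | (prod) "f = (\<lambda>xs. \<Prod>i<n. F i (xs i))" "\<And>j. j < n \<Longrightarrow> measure_pmf.expectation (P j) (F j) \<noteq> 0"
    by auto
  then show "locally_recoverable P kk g i (F i) \<and>
      perfectly_secured (local_pmf P kk i) (\<lambda>(x, k). g i x k) (\<lambda>(x, k). F i x)"
  proof cases
    case sum
    then show ?thesis
      using summands_recoverable_and_secured[OF fin computes[unfolded sum] secured[unfolded sum] i]
      by simp
  next
    case prod
    then show ?thesis
      using factors_recoverable_and_secured[OF fin prod(2) computes[unfolded prod(1)]
          secured[unfolded prod(1)] i]
      by simp
  qed
qed

end
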